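(* Let $G$ be an $r$-graph on $n$ vertices and let $\varepsilon>0$. One can delete at most $\varepsilon n^r$ edges from $G$ so that the resulting $r$-graph $G'$ has the following property: for any $\mathbf x,\mathbf y\in\vec E(G')$ that are tightly connected in $G'$, there is a tight walk from $\mathbf x$ to $\mathbf y$ in $G'$ of stretch $sr$ for some integer $s\le(2r+1)\varepsilon^{-r}$.
   Context: An $r$-graph is an $r$-uniform hypergraph. An oriented edge of $G$ is an ordered $r$-tuple $x_1\cdots x_r$ whose underlying set is an edge of $G$; $\vec E(G)$ is the set of oriented edges. $\mathbf x,\mathbf y\in\vec E(G)$ are tightly connected (in $G$) if there is a sequence $\mathbf x=\mathbf z^{(0)},\dots,\mathbf z^{(t)}=\mathbf y$ of oriented edges of $G$ such that consecutive terms differ in at most one coordinate. A tight walk of stretch $\ell$ is a sequence $v_1\cdots v_{\ell+r}$ of (not necessarily distinct) vertices such that $v_{i+1}\cdots v_{i+r}\in\vec E(G)$ for each $0\le i\le\ell$; it is a walk from $v_1\cdots v_r$ to $v_{\ell+1}\cdots v_{\ell+r}$. *)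

theory Defs
  imports Complex_Main
begin

definition r_graph :: "nat \<Rightarrow> 'a set \<Rightarrow> 'a set set \<Rightarrow> bool" where
  "r_graph r V E \<longleftrightarrow> finite V \<and> (\<forall>e\<in>E. e \<subseteq> V \<and> card e = r)"

definition oriented_edges :: "nat \<Rightarrow> 'a set set \<Rightarrow> 'a list set" where
  "oriented_edges r E = {xs. length xs = r \<and> set xs \<in> E}"

definition tight_step :: "nat \<Rightarrow> 'a set set \<Rightarrow> ('a list \<times> 'a list) set" where
  "tight_step r E = {(xs, ys). xs \<in> oriented_edges r E \<and> ys \<in> oriented_edges r E \<and>
      card {i. i < r \<and> xs ! i \<noteq> ys ! i} \<le> 1}"

definition tightly_connected :: "nat \<Rightarrow> 'a set set \<Rightarrow> 'a list \<Rightarrow> 'a list \<Rightarrow> bool" where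
  "tightly_connected r E x y \<longleftrightarrow>
     x \<in> oriented_edges r E \<and> y \<in> oriented_edges r E \<and> (x, y) \<in> (tight_step r E)\<^sup>*"

definition tight_walk :: "nat \<Rightarrow> 'a set set \<Rightarrow> nat \<Rightarrow> 'a list \<Rightarrow> bool" where
  "tight_walk r E l vs \<longleftrightarrow> length vs = l + r \<and>
     (\<forall>i\<le>l. take r (drop i vs) \<in> oriented_edges r E)"

definition tight_walk_from_to :: "nat \<Rightarrow> 'a set set \<Rightarrow> nat \<Rightarrow> 'a list \<Rightarrow> 'a list \<Rightarrow> 'a list \<Rightarrow> bool" where
  "tight_walk_from_to r E l vs x y \<longleftrightarrow> tight_walk r E l vs \<and> take r vs = x \<and> drop l vs = y"

end

theory Submission
  imports Defs
begin

(* Deleting, one (r-1)-set S at a time, all edges through an S of codegree below \<epsilon>n costs fewer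
   than \<epsilon>n edges per set of the shadow, hence at most \<epsilon>n^r edges, and leaves an r-graph in which
   every (r-1)-subset of an edge has codegree at least \<epsilon>n.  There, renewing the coordinates of an
   oriented edge one after the other reaches at least (\<epsilon>n)^r oriented edges in r tight steps.
   Along a shortest tight path x = z_0, ..., z_k = y the r-step balls around z_0, z_(2r+1),
   z_(2(2r+1)), ... are pairwise disjoint, since otherwise the path could be shortcut; as there
   are at most n^r oriented edges, k <= (2r+1)/\<epsilon>^r.  Finally a tight path of k steps is traced by
   a tight walk of stretch kr that enters the coordinates of each next oriented edge one at a
   time. *)

definition codegree :: "'a set set \<Rightarrow> 'a set \<Rightarrow> nat" where
  "codegree F S = card {u. u \<notin> S \<and> insert u S \<in> F}"

definition codegree_at_least :: "real \<Rightarrow> 'a set set \<Rightarrow> bool" where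
  "codegree_at_least c F \<longleftrightarrow> (\<forall>e\<in>F. \<forall>u\<in>e. c \<le> real (codegree F (e - {u})))"

definition shadow :: "'a set set \<Rightarrow> 'a set set" where
  "shadow F = {e - {u} | e u. e \<in> F \<and> u \<in> e}"

lemma shadow_mono: "F \<subseteq> G \<Longrightarrow> shadow F \<subseteq> shadow G"
  unfolding shadow_def by blast

lemma finite_shadow:
  assumes "finite F" "\<forall>e\<in>F. finite e"
  shows "finite (shadow F)"
proof -
  have "shadow F = (\<Union>e\<in>F. (\<lambda>u. e - {u}) ` e)" unfolding shadow_def by auto
  then show ?thesis using assms by simp
qed

lemma card_shadow_le:
  assumes "r_graph r V E"
  shows "card (shadow E) \<le> card V ^ (r - 1)"
proof -
  have fV: "finite V" using assms unfolding r_graph_def by auto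
  have "shadow E \<subseteq> {T. T \<subseteq> V \<and> card T = r - 1}"
  proof
    fix T assume "T \<in> shadow E"
    then obtain e u where "T = e - {u}" "e \<in> E" "u \<in> e" unfolding shadow_def by blast
    moreover have "e \<subseteq> V" "card e = r" using assms \<open>e \<in> E\<close> unfolding r_graph_def by auto
    ultimately show "T \<in> {T. T \<subseteq> V \<and> card T = r - 1}"
      using finite_subset[OF _ fV] by auto
  qed
  then have "card (shadow E) \<le> card V choose (r - 1)"
    using card_mono[of "{T. T \<subseteq> V \<and> card T = r - 1}"] n_subsets[OF fV] fV by simp
  also have "\<dots> \<le> card V ^ (r - 1)"
    by (cases "r - 1 \<le> card V") (simp_all add: binomial_le_pow binomial_eq_0)
  finally show ?thesis .
qed

lemma remove_extensions:
  fixes F :: "'a set set" and S :: "'a set"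
  defines "F' \<equiv> F - (\<lambda>w. insert w S) ` (- S)"
  shows "card (F - F') = codegree F S" and "shadow F' \<subseteq> shadow F - {S}"
proof -
  let ?N = "{w. w \<notin> S \<and> insert w S \<in> F}"
  have inj: "inj_on (\<lambda>w. insert w S) ?N" by (rule inj_onI) blast
  have "F - F' = (\<lambda>w. insert w S) ` ?N" unfolding F'_def by auto
  then show "card (F - F') = codegree F S" unfolding codegree_def by (simp add: card_image[OF inj])
  have "S \<notin> shadow F'" unfolding shadow_def F'_def by auto
  moreover have "shadow F' \<subseteq> shadow F" unfolding F'_def by (rule shadow_mono) blast
  ultimately show "shadow F' \<subseteq> shadow F - {S}" by blast
qed

text \<open>Removing the extensions of a set of codegree below c costs less than c edges and takes
  the set out of the shadow, so the total cost is charged to the shadow.\<close>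
lemma codegree_cleanup:
  fixes c :: real
  assumes "finite F" "\<forall>e\<in>F. finite e" "0 \<le> c"
  shows "\<exists>F'\<subseteq>F. codegree_at_least c F' \<and> real (card (F - F')) \<le> c * real (card (shadow F))"
  using assms(1,2)
proof (induction "card F" arbitrary: F rule: less_induct)
  case less
  show ?case
  proof (cases "codegree_at_least c F")
    case True
    then show ?thesis using assms(3) by (intro exI[of _ F]) auto
  next
    case False
    then obtain e u where eu: "e \<in> F" "u \<in> e" and small: "real (codegree F (e - {u})) < c"
      unfolding codegree_at_least_def by force
    define S where "S = e - {u}"
    define F1 where "F1 = F - (\<lambda>w. insert w S) ` (- S)"
    have "F1 \<subset> F" using eu unfolding F1_def S_def by (auto intro!: image_eqI[of _ _ u])
    then have "card F1 < card F" using less.prems(1) by (rule psubset_card_mono[rotated])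
    moreover have "finite F1" "\<forall>e\<in>F1. finite e" using less.prems unfolding F1_def by auto
    ultimately obtain F' where F': "F' \<subseteq> F1" "codegree_at_least c F'"
        and cost1: "real (card (F1 - F')) \<le> c * real (card (shadow F1))"
      using less.hyps by blast
    have cost0: "real (card (F - F1)) \<le> c"
      using remove_extensions(1)[of F S] small unfolding F1_def S_def by simp
    have "S \<in> shadow F" using eu unfolding shadow_def S_def by blast
    then have "shadow F1 \<subset> shadow F" using remove_extensions(2)[of F S] unfolding F1_def by blast
    then have "card (shadow F1) < card (shadow F)"
      using finite_shadow[OF less.prems] by (rule psubset_card_mono[rotated])
    then have "c * (real (card (shadow F1)) + 1) \<le> c * real (card (shadow F))"
      using assms(3) by (intro mult_left_mono) auto
    moreover have "F - F' = (F - F1) \<union> (F1 - F')" using F'(1) unfolding F1_def by auto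
    then have "card (F - F') \<le> card (F - F1) + card (F1 - F')" by (metis card_Un_le)
    ultimately have "real (card (F - F')) \<le> c * real (card (shadow F))"
      using cost0 cost1 by (simp add: algebra_simps)
    then show ?thesis using F' unfolding F1_def by blast
  qed
qed

lemma r_graph_finite:
  assumes "r_graph r V E"
  shows "finite E" "\<forall>e\<in>E. finite e"
proof -
  have "finite V" "E \<subseteq> Pow V" using assms unfolding r_graph_def by auto
  then show "finite E" "\<forall>e\<in>E. finite e" by (auto intro: finite_subset[of _ "Pow V"] finite_subset)
qed

lemma r_graph_subset: "r_graph r V E \<Longrightarrow> E' \<subseteq> E \<Longrightarrow> r_graph r V E'"
  unfolding r_graph_def by blast

lemma oriented_edgeD:
  assumes "r_graph r V E" "w \<in> oriented_edges r E"
  shows "length w = r" "set w \<in> E" "set w \<subseteq> V" "distinct w"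
proof -
  show len: "length w = r" and edge: "set w \<in> E"
    using assms(2) unfolding oriented_edges_def by auto
  show "set w \<subseteq> V" using assms(1) edge unfolding r_graph_def by auto
  have "card (set w) = length w" using assms(1) edge len unfolding r_graph_def by auto
  then show "distinct w" by (rule card_distinct)
qed

lemma oriented_edges_subset_lists:
  "r_graph r V E \<Longrightarrow> oriented_edges r E \<subseteq> {xs. set xs \<subseteq> V \<and> length xs = r}"
  using oriented_edgeD by blast

lemma finite_oriented_edges:
  assumes "r_graph r V E"
  shows "finite (oriented_edges r E)"
proof (rule finite_subset[OF oriented_edges_subset_lists[OF assms]])
  show "finite {xs. set xs \<subseteq> V \<and> length xs = r}"
    using assms unfolding r_graph_def by (simp add: finite_lists_length_eq)
qed

lemma card_oriented_edges_le:
  assumes "r_graph r V E"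
  shows "card (oriented_edges r E) \<le> card V ^ r"
proof -
  have "finite V" using assms unfolding r_graph_def by simp
  then show ?thesis
    using card_mono[OF finite_lists_length_eq oriented_edges_subset_lists[OF assms]]
    by (simp add: card_lists_length_eq)
qed

lemma tight_step_subset: "tight_step r E \<subseteq> oriented_edges r E \<times> oriented_edges r E"
  unfolding tight_step_def by auto

lemma sym_tight_step: "sym (tight_step r E)"
  unfolding tight_step_def sym_def by (auto simp: eq_commute)

lemma sym_relpow: "sym R \<Longrightarrow> sym (R ^^ n)"
proof (induction n)
  case (Suc n)
  then show ?case by (simp add: sym_conv_converse_eq converse_relcomp relpow_commute)
qed (simp add: sym_def)

lemma relpow_closed: "R \<subseteq> A \<times> A \<Longrightarrow> x \<in> A \<Longrightarrow> (x, y) \<in> R ^^ n \<Longrightarrow> y \<in> A"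
  by (cases n) (auto elim: relpow_Suc_E)

text \<open>Two oriented edges differing in at most one coordinate agree either before or
  after position t, so the mixed window has the vertex set of one of them.\<close>
lemma tight_step_window:
  assumes "(z, y) \<in> tight_step r E" "t \<le> r"
  shows "drop t z @ take t y \<in> oriented_edges r E"
proof -
  let ?D = "{i. i < r \<and> z ! i \<noteq> y ! i}"
  have z: "length z = r" "set z \<in> E" and y: "length y = r" "set y \<in> E"
    and one: "card ?D \<le> 1"
    using assms(1) unfolding tight_step_def oriented_edges_def by auto
  have len: "length (drop t z @ take t y) = r" using z y assms(2) by simp
  have "take t z = take t y \<or> drop t z = drop t y"
  proof (rule ccontr)
    assume "\<not> ?thesis"
    then obtain i j where "i < t" "z ! i \<noteq> y ! i" "j < r - t" "z ! (t + j) \<noteq> y ! (t + j)"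
      using z y assms(2) by (auto simp: list_eq_iff_nth_eq)
    then have "{i, t + j} \<subseteq> ?D" "card {i, t + j} = 2" using assms(2) by auto
    then show False using one card_mono[of ?D "{i, t + j}"] by simp
  qed
  then have "set (drop t z @ take t y) = set z \<or> set (drop t z @ take t y) = set y"
    by (metis append_take_drop_id set_append sup_commute)
  then show ?thesis using len z y unfolding oriented_edges_def by auto
qed

lemma tight_walk_of_relpow:
  assumes "x \<in> oriented_edges r E" "(x, y) \<in> tight_step r E ^^ k"
  shows "\<exists>vs. tight_walk_from_to r E (k * r) vs x y"
  using assms(2)
proof (induction k arbitrary: y)
  case 0
  then show ?case
    using assms(1) unfolding tight_walk_from_to_def tight_walk_def oriented_edges_def
    by (intro exI[of _ x]) auto
next
  case (Suc k)
  then obtain z where "(x, z) \<in> tight_step r E ^^ k" and zy: "(z, y) \<in> tight_step r E" by auto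
  with Suc.IH obtain vs where "tight_walk_from_to r E (k * r) vs x z" by blast
  then have len: "length vs = k * r + r" "take r vs = x" "drop (k * r) vs = z"
    and win: "\<forall>i\<le>k * r. take r (drop i vs) \<in> oriented_edges r E"
    unfolding tight_walk_from_to_def tight_walk_def by auto
  have ly: "length y = r" using zy unfolding tight_step_def oriented_edges_def by auto
  have "take r (drop i (vs @ y)) \<in> oriented_edges r E" if i: "i \<le> Suc k * r" for i
  proof (cases "i \<le> k * r")
    case True
    then have "take r (drop i (vs @ y)) = take r (drop i vs)" using len(1) by simp
    then show ?thesis using win True by metis
  next
    case False
    define t where "t = i - k * r"
    have t: "i = k * r + t" "t \<le> r" using False i unfolding t_def by auto
    then have "drop i (vs @ y) = drop t z @ y" using len by (simp add: add.commute flip: drop_drop)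
    then have "take r (drop i (vs @ y)) = drop t z @ take t y"
      using t(2) zy unfolding tight_step_def oriented_edges_def by auto
    then show ?thesis using tight_step_window[OF zy t(2)] by simp
  qed
  then have "tight_walk_from_to r E (Suc k * r) (vs @ y) x y"
    using len ly unfolding tight_walk_from_to_def tight_walk_def by simp
  then show ?case by blast
qed

lemma tight_step_list_update:
  assumes "r_graph r V E" "w \<in> oriented_edges r E" "j < r"
    and "u \<notin> set w - {w ! j}" "insert u (set w - {w ! j}) \<in> E"
  shows "(w, w[j := u]) \<in> tight_step r E"
proof -
  note w = oriented_edgeD[OF assms(1,2)]
  have "set (w[j := u]) = insert u (set w - {w ! j})"
    using set_update_distinct[OF w(4)] w(1) assms(3) by simp
  then have "w[j := u] \<in> oriented_edges r E"
    using w(1) assms(5) unfolding oriented_edges_def by simp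
  moreover have "card {i. i < r \<and> w ! i \<noteq> w[j := u] ! i} \<le> card {j}"
    using w(1) assms(3) by (intro card_mono) (auto simp: nth_list_update)
  ultimately show ?thesis using assms(2) unfolding tight_step_def by simp
qed

lemma inj_on_list_update:
  assumes "\<forall>w\<in>A. j < length w \<and> w ! j = a"
  shows "inj_on (\<lambda>(w, u). w[j := u]) (SIGMA w:A. C w)"
proof (rule inj_onI, clarify)
  fix w u w' u' assume "w \<in> A" "w' \<in> A" and eq: "w[j := u] = w'[j := u']"
  then have "(w[j := u])[j := a] = (w'[j := u'])[j := a]" by simp
  with assms \<open>w \<in> A\<close> \<open>w' \<in> A\<close> have "w = w'" by (metis list_update_id list_update_overwrite)
  moreover have "w[j := u] ! j = w'[j := u'] ! j" using eq by simp
  then have "u = u'" using assms \<open>w \<in> A\<close> \<open>w' \<in> A\<close> by simp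
  ultimately show "w = w' \<and> u = u'" by simp
qed

lemma tight_reach_nth:
  assumes "r_graph r V E" "z \<in> oriented_edges r E" "j < r"
    and "(z, w) \<in> tight_step r E ^^ j" "drop j w = drop j z"
  shows "w \<in> oriented_edges r E" "j < length w" "w ! j = z ! j"
proof -
  show w: "w \<in> oriented_edges r E" using relpow_closed[OF tight_step_subset assms(2,4)] .
  have "length w = r" "length z = r" using oriented_edgeD(1)[OF assms(1)] w assms(2) by auto
  then show "j < length w" "w ! j = z ! j"
    using assms(3,5) by (metis nth_drop add_0_right less_imp_le)+
qed

lemma tight_reach_list_update:
  assumes "r_graph r V E" "z \<in> oriented_edges r E" "j < r"
    and "(z, w) \<in> tight_step r E ^^ j" "drop j w = drop j z"
    and "u \<notin> set w - {w ! j}" "insert u (set w - {w ! j}) \<in> E"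
  shows "(z, w[j := u]) \<in> tight_step r E ^^ Suc j" "drop (Suc j) (w[j := u]) = drop (Suc j) z"
proof -
  have "w \<in> oriented_edges r E" using tight_reach_nth(1)[OF assms(1-5)] .
  then have "(w, w[j := u]) \<in> tight_step r E" using assms by (intro tight_step_list_update) auto
  then show "(z, w[j := u]) \<in> tight_step r E ^^ Suc j" using assms(4) by auto
  have "drop (Suc j) (w[j := u]) = drop 1 (drop j w)" by simp
  also have "\<dots> = drop (Suc j) z" using assms(5) by simp
  finally show "drop (Suc j) (w[j := u]) = drop (Suc j) z" .
qed

lemma codegree_at_least_oriented_edge:
  assumes "r_graph r V E" "codegree_at_least c E" "w \<in> oriented_edges r E" "j < r"
  shows "c \<le> real (codegree E (set w - {w ! j}))"
proof -
  have "set w \<in> E" "w ! j \<in> set w" using oriented_edgeD(1,2)[OF assms(1,3)] assms(4) by auto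
  then show ?thesis using assms(2) unfolding codegree_at_least_def by blast
qed

lemma finite_extensions:
  assumes "r_graph r V E"
  shows "finite {u. u \<notin> S \<and> insert u S \<in> E}"
proof (rule finite_subset)
  show "{u. u \<notin> S \<and> insert u S \<in> E} \<subseteq> V" using assms unfolding r_graph_def by blast
  show "finite V" using assms unfolding r_graph_def by blast
qed

text \<open>Fixing the coordinates from j on makes the map (w, u) \<mapsto> w[j := u] injective, and every
  w has at least c choices of the new vertex u by the codegree condition.\<close>
lemma card_tight_reach_ge:
  assumes rg: "r_graph r V E" and deg: "codegree_at_least c E" and "0 \<le> c"
    and z: "z \<in> oriented_edges r E"
  shows "j \<le> r \<Longrightarrow> c ^ j \<le> real (card {w. (z, w) \<in> tight_step r E ^^ j \<and> drop j w = drop j z})"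
proof (induction j)
  case 0
  have "{w. (z, w) \<in> tight_step r E ^^ 0 \<and> drop 0 w = drop 0 z} = {z}" by auto
  then show ?case by simp
next
  case (Suc j)
  let ?R = "tight_step r E"
  define A where "A = {w. (z, w) \<in> ?R ^^ j \<and> drop j w = drop j z}"
  define B where "B = {w. (z, w) \<in> ?R ^^ Suc j \<and> drop (Suc j) w = drop (Suc j) z}"
  define C where "C w = {u. u \<notin> set w - {w ! j} \<and> insert u (set w - {w ! j}) \<in> E}" for w
  have j: "j < r" using Suc.prems by simp
  have A_OE: "A \<subseteq> oriented_edges r E" and A_nth: "\<forall>w\<in>A. j < length w \<and> w ! j = z ! j"
    using tight_reach_nth[OF rg z j] unfolding A_def by blast+
  have B_OE: "B \<subseteq> oriented_edges r E"
    using relpow_closed[OF tight_step_subset z] unfolding B_def by blast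
  have fin_OE: "finite (oriented_edges r E)" using finite_oriented_edges[OF rg] .
  have C_ge: "c \<le> real (card (C w))" if "w \<in> A" for w
    using codegree_at_least_oriented_edge[OF rg deg _ j] A_OE that
    unfolding C_def codegree_def by blast
  have fin_C: "finite (C w)" for w
    unfolding C_def using finite_extensions[OF rg] .
  have "(\<lambda>(w, u). w[j := u]) ` (SIGMA w:A. C w) \<subseteq> B"
  proof clarify
    fix w u assume "w \<in> A" "u \<in> C w"
    then show "w[j := u] \<in> B"
      using tight_reach_list_update[OF rg z j, of w u] unfolding A_def B_def C_def by simp
  qed
  then have "card ((\<lambda>(w, u). w[j := u]) ` (SIGMA w:A. C w)) \<le> card B"
    using B_OE fin_OE by (intro card_mono) (auto intro: finite_subset)
  then have SB: "card (SIGMA w:A. C w) \<le> card B"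
    by (simp add: card_image[OF inj_on_list_update[OF A_nth]])
  have "c ^ Suc j = c ^ j * c" by simp
  also have "\<dots> \<le> real (card A) * c"
    using Suc \<open>0 \<le> c\<close> unfolding A_def by (intro mult_right_mono) simp_all
  also have "\<dots> \<le> real (card (SIGMA w:A. C w))"
    using finite_subset[OF A_OE fin_OE] fin_C C_ge by (simp add: sum_bounded_below)
  also have "\<dots> \<le> real (card B)" using SB by simp
  finally show ?case unfolding B_def .
qed

lemma relpow_path_segment:
  assumes "\<forall>i<k. (f i, f (Suc i)) \<in> R" "a \<le> b" "b \<le> k"
  shows "(f a, f b) \<in> R ^^ (b - a)"
  unfolding relpow_fun_conv using assms by (intro exI[of _ "\<lambda>i. f (a + i)"]) auto

text \<open>A common point of the two balls would shortcut the path by a detour of length 2d.\<close>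
lemma shortest_path_balls_disjoint:
  assumes "sym R" and path: "\<forall>i<k. (f i, f (Suc i)) \<in> R"
    and shortest: "\<forall>m. (f 0, f k) \<in> R ^^ m \<longrightarrow> k \<le> m"
    and "a + 2 * d < b" "b \<le> k"
  shows "(R ^^ d) `` {f a} \<inter> (R ^^ d) `` {f b} = {}"
proof (rule ccontr)
  assume "(R ^^ d) `` {f a} \<inter> (R ^^ d) `` {f b} \<noteq> {}"
  then obtain w where "(f a, w) \<in> R ^^ d" "(f b, w) \<in> R ^^ d" by blast
  then have "(f a, w) \<in> R ^^ d" "(w, f b) \<in> R ^^ d"
    using sym_relpow[OF \<open>sym R\<close>] by (auto dest: symD)
  moreover have "(f 0, f a) \<in> R ^^ a" using relpow_path_segment[OF path, of 0 a] assms(4,5) by simp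
  moreover have "(f b, f k) \<in> R ^^ (k - b)" using relpow_path_segment[OF path, of b k] assms(5) by simp
  ultimately have "(f 0, f k) \<in> R ^^ (a + (d + (d + (k - b))))"
    unfolding relpow_add by blast
  then show False using shortest assms(4,5) by auto
qed

lemma card_disjoint_subsets_ge:
  fixes b :: real
  assumes "finite A" "\<forall>i\<le>q. B i \<subseteq> A" "\<forall>i j. i < j \<and> j \<le> q \<longrightarrow> B i \<inter> B j = {}"
    and "\<forall>i\<le>q. b \<le> real (card (B i))"
  shows "real (Suc q) * b \<le> real (card A)"
proof -
  have "(\<Sum>i\<le>q. card (B i)) = card (\<Union>i\<le>q. B i)"
  proof (rule card_UN_disjoint[symmetric])
    show "\<forall>i\<in>{..q}. finite (B i)" using assms(1,2) finite_subset by blast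
    show "\<forall>i\<in>{..q}. \<forall>j\<in>{..q}. i \<noteq> j \<longrightarrow> B i \<inter> B j = {}"
    proof (intro ballI impI)
      fix i j assume "i \<in> {..q}" "j \<in> {..q}" "i \<noteq> j"
      then consider "i < j" "j \<le> q" | "j < i" "i \<le> q" by fastforce
      then show "B i \<inter> B j = {}" using assms(3) by cases blast+
    qed
  qed simp
  also have "\<dots> \<le> card A" using assms(1,2) by (intro card_mono) auto
  finally have "(\<Sum>i\<le>q. real (card (B i))) \<le> real (card A)" by (simp flip: of_nat_sum)
  moreover have "real (Suc q) * b \<le> (\<Sum>i\<le>q. real (card (B i)))"
    using sum_bounded_below[of "{..q}" b] assms(4) by simp
  ultimately show ?thesis by linarith
qed

text \<open>The balls of radius d around every (2d+1)-st vertex of a shortest path are disjoint.\<close>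
lemma shortest_path_le_large_balls:
  fixes b :: real
  assumes "sym R" "R \<subseteq> A \<times> A" "finite A" "x \<in> A" "(x, y) \<in> R\<^sup>*" "0 \<le> b"
    and balls: "\<forall>z\<in>A. b \<le> real (card ((R ^^ d) `` {z}))"
  shows "\<exists>k. (x, y) \<in> R ^^ k \<and> real k * b \<le> real (2 * d + 1) * real (card A)"
proof -
  define k where "k = (LEAST m. (x, y) \<in> R ^^ m)"
  have "\<exists>m. (x, y) \<in> R ^^ m" using assms(5) rtrancl_power by blast
  then have k: "(x, y) \<in> R ^^ k" and shortest: "\<forall>m. (x, y) \<in> R ^^ m \<longrightarrow> k \<le> m"
    unfolding k_def by (auto intro: LeastI_ex Least_le)
  then obtain f where f: "f 0 = x" "f k = y" and path: "\<forall>i<k. (f i, f (Suc i)) \<in> R"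
    unfolding relpow_fun_conv by blast
  define D where "D = 2 * d + 1"
  define q where "q = k div D"
  have iD: "i * D \<le> k" if "i \<le> q" for i
    using that div_times_less_eq_dividend[of k D] mult_le_mono1[OF that, of D] unfolding q_def
    by linarith
  have center_A: "f (i * D) \<in> A" if "i \<le> q" for i
    using relpow_path_segment[OF path le0 iD[OF that]] f(1) relpow_closed[OF assms(2,4)] by simp
  have packing: "real (Suc q) * b \<le> real (card A)"
  proof (rule card_disjoint_subsets_ge[OF assms(3)])
    show "\<forall>i\<le>q. (R ^^ d) `` {f (i * D)} \<subseteq> A"
      using relpow_closed[OF assms(2) center_A] by blast
    show "\<forall>i\<le>q. b \<le> real (card ((R ^^ d) `` {f (i * D)}))" using balls center_A by blast
    show "\<forall>i j. i < j \<and> j \<le> q \<longrightarrow> (R ^^ d) `` {f (i * D)} \<inter> (R ^^ d) `` {f (j * D)} = {}"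
    proof (intro allI impI, elim conjE)
      fix i j assume "i < j" "j \<le> q"
      then have "i * D + D \<le> j * D" using mult_le_mono1[of "Suc i" j D] by simp
      then have "i * D + 2 * d < j * D" unfolding D_def by simp
      then show "(R ^^ d) `` {f (i * D)} \<inter> (R ^^ d) `` {f (j * D)} = {}"
        using shortest_path_balls_disjoint[OF assms(1) path] shortest f iD \<open>j \<le> q\<close> by simp
    qed
  qed
  have "k < Suc q * D"
  proof -
    have "k mod D < D" unfolding D_def by simp
    moreover have "q * D + k mod D = k" unfolding q_def by (rule div_mult_mod_eq)
    ultimately show ?thesis by simp
  qed
  then have "real k \<le> real (Suc q * D)" by (simp only: of_nat_le_iff)
  then have "real k * b \<le> real (Suc q * D) * b" using \<open>0 \<le> b\<close> by (rule mult_right_mono)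
  also have "\<dots> = real D * (real (Suc q) * b)" by (simp add: algebra_simps)
  also have "\<dots> \<le> real D * real (card A)" using packing by (intro mult_left_mono) auto
  finally show ?thesis using k unfolding D_def by (auto simp: mult.commute)
qed

lemma short_tight_walk:
  fixes \<epsilon> :: real
  assumes rg: "r_graph r V E" and "1 \<le> r" and "0 < \<epsilon>"
    and deg: "codegree_at_least (\<epsilon> * real (card V)) E"
    and conn: "tightly_connected r E x y"
  shows "\<exists>s::nat. real s \<le> (2 * real r + 1) / \<epsilon> ^ r \<and> (\<exists>vs. tight_walk_from_to r E (s * r) vs x y)"
proof -
  let ?R = "tight_step r E" and ?n = "real (card V)"
  have x: "x \<in> oriented_edges r E" and xy: "(x, y) \<in> ?R\<^sup>*"
    using conn unfolding tightly_connected_def by auto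
  have fin_OE: "finite (oriented_edges r E)" using finite_oriented_edges[OF rg] .
  have balls: "\<forall>z\<in>oriented_edges r E. (\<epsilon> * ?n) ^ r \<le> real (card ((?R ^^ r) `` {z}))"
  proof
    fix z assume z: "z \<in> oriented_edges r E"
    have "(?R ^^ r) `` {z} \<subseteq> oriented_edges r E" using relpow_closed[OF tight_step_subset z] by blast
    then have "card {w. (z, w) \<in> ?R ^^ r \<and> drop r w = drop r z} \<le> card ((?R ^^ r) `` {z})"
      using fin_OE by (intro card_mono) (auto intro: finite_subset)
    then show "(\<epsilon> * ?n) ^ r \<le> real (card ((?R ^^ r) `` {z}))"
      using card_tight_reach_ge[OF rg deg _ z, of r] \<open>0 < \<epsilon>\<close> by simp
  qed
  have npos: "0 < ?n"
  proof -
    have "set x \<subseteq> V" "x \<noteq> []" using oriented_edgeD(1,3)[OF rg x] \<open>1 \<le> r\<close> by auto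
    then have "V \<noteq> {}" by auto
    moreover have "finite V" using rg unfolding r_graph_def by simp
    ultimately show ?thesis by (simp add: card_gt_0_iff)
  qed
  obtain k where k: "(x, y) \<in> ?R ^^ k"
    and bound: "real k * (\<epsilon> * ?n) ^ r \<le> real (2 * r + 1) * real (card (oriented_edges r E))"
    using shortest_path_le_large_balls[OF sym_tight_step tight_step_subset fin_OE x xy _ balls]
      \<open>0 < \<epsilon>\<close> by auto
  note bound
  also have "\<dots> \<le> real (2 * r + 1) * ?n ^ r"
    using card_oriented_edges_le[OF rg] by (intro mult_left_mono) (simp_all flip: of_nat_power)
  finally have "(real k * \<epsilon> ^ r) * ?n ^ r \<le> real (2 * r + 1) * ?n ^ r"
    by (simp only: power_mult_distrib mult.assoc)
  then have "real k * \<epsilon> ^ r \<le> real (2 * r + 1)"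
    using zero_less_power[OF npos] by (rule mult_right_le_imp_le)
  then have "real k \<le> (2 * real r + 1) / \<epsilon> ^ r"
    using \<open>0 < \<epsilon>\<close> by (simp add: pos_le_divide_eq add.commute)
  then show ?thesis using tight_walk_of_relpow[OF x k] by blast
qed

theorem proposition4p1:
  fixes r :: nat and V :: "'a set" and E :: "'a set set" and \<epsilon> :: real
  assumes "r \<ge> 1" and "r_graph r V E" and "\<epsilon> > 0"
  shows "\<exists>E' \<subseteq> E. real (card (E - E')) \<le> \<epsilon> * real (card V) ^ r \<and>
           (\<forall>x y. tightly_connected r E' x y \<longrightarrow>
              (\<exists>s::nat. real s \<le> (2 * real r + 1) / \<epsilon> ^ r \<and>
                 (\<exists>vs. tight_walk_from_to r E' (s * r) vs x y)))"
proof -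
  let ?n = "real (card V)"
  have "0 \<le> \<epsilon> * ?n" using assms(3) by simp
  with r_graph_finite[OF assms(2)] obtain E' where E': "E' \<subseteq> E" "codegree_at_least (\<epsilon> * ?n) E'"
    and cost: "real (card (E - E')) \<le> \<epsilon> * ?n * real (card (shadow E))"
    by (blast dest: codegree_cleanup)
  note cost
  also have "\<dots> \<le> \<epsilon> * ?n * ?n ^ (r - 1)"
    using card_shadow_le[OF assms(2)] assms(3) by (intro mult_left_mono) (simp_all flip: of_nat_power)
  also have "\<dots> = \<epsilon> * ?n ^ r" using assms(1) by (simp add: mult.assoc flip: power_Suc)
  finally have "real (card (E - E')) \<le> \<epsilon> * ?n ^ r" .
  moreover have "r_graph r V E'" using assms(2) E'(1) by (rule r_graph_subset)
  ultimately show ?thesis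
    using E' short_tight_walk[of r V E' \<epsilon>] assms(1,3) by (intro exI[of _ E']) blast
qed

end
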